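(* Each of the exposure metrics $ED$, $ER$, $DTD$, $DTR$, $DID$, $DIR$ satisfies distinguishability of groups: for every population $\mathcal D$ with uniform relevance, $v_{\mathrm{last}}(m,\mathcal D)<v_{\mathrm{opt}}(m)<v_{\mathrm{first}}(m,\mathcal D)$.
   Context: A population is a finite set $\mathcal{D}$ of candidates partitioned into two nonempty groups, a non-protected group $G_0$ and a protected group $G_1$; each candidate $d$ has relevance $y(d)\in\mathbb R$. For a candidate set $D\subseteq\mathcal D$ with $n=|D|$, a ranking is a bijection $r:\{1,\dots,n\}\to D$, $r^{-1}(d)$ denotes the position of $d$. Uniform relevance means $y(d)=1$ for all $d\in\mathcal D$. $\mathcal R_{\mathrm{first}}(D)$ ($\mathcal R_{\mathrm{last}}(D)$) is the set of rankings of $D$ in which every candidate of $G_1\cap D$ is ranked above (below) every candidate of $G_0\cap D$. Under uniform relevance, $v_{\mathrm{first}}(m,D)$ and $v_{\mathrm{last}}(m,D)$ denote the (common) values of $m$ on rankings in $\mathcal R_{\mathrm{first}}(D)$ and $\mathcal R_{\mathrm{last}}(D)$. Position bias $b(k)=1/\log_2(k+1)$. Exposure metrics: for a ranking $r$ of $D$ and $G\in\{G_0,G_1\}$, $\mathrm{Exposure}(G|r)=\frac{1}{|G|}\sum_{d\in G\cap D} b(r^{-1}(d))$, $Y(G)=\frac1{|G|}\sum_{d\in G}y(d)$, $CTR(G|r)=\frac1{|G|}\sum_{d\in G\cap D} b(r^{-1}(d))\,y(d)$ (here $|G|$ is the size of the group in the whole population). Then $ED(r)=\mathrm{Exposure}(G_1|r)-\mathrm{Exposure}(G_0|r)$,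 $ER(r)=\mathrm{Exposure}(G_1|r)/\mathrm{Exposure}(G_0|r)$, $DTD(r)=\frac{\mathrm{Exposure}(G_1|r)}{Y(G_1)}-\frac{\mathrm{Exposure}(G_0|r)}{Y(G_0)}$, $DTR(r)=\frac{\mathrm{Exposure}(G_1|r)}{\mathrm{Exposure}(G_0|r)}\cdot\frac{Y(G_0)}{Y(G_1)}$, $DID(r)=\frac{CTR(G_1|r)}{Y(G_1)}-\frac{CTR(G_0|r)}{Y(G_0)}$, $DIR(r)=\frac{CTR(G_1|r)}{CTR(G_0|r)}\cdot\frac{Y(G_0)}{Y(G_1)}$. Optimal values: $v_{\mathrm{opt}}=0$ for $ED,DTD,DID$ and $v_{\mathrm{opt}}=1$ for $ER,DTR,DIR$. *)

theory Defs
  imports Complex_Main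
begin

definition bias :: "nat \<Rightarrow> real" where
  "bias k = 1 / log 2 (real k + 1)"

definition is_ranking :: "'a set \<Rightarrow> (nat \<Rightarrow> 'a) \<Rightarrow> bool" where
  "is_ranking D r \<longleftrightarrow> bij_betw r {1..card D} D"

definition pos :: "'a set \<Rightarrow> (nat \<Rightarrow> 'a) \<Rightarrow> 'a \<Rightarrow> nat" where
  "pos D r d = the_inv_into {1..card D} r d"

definition R_first :: "'a set \<Rightarrow> 'a set \<Rightarrow> 'a set \<Rightarrow> (nat \<Rightarrow> 'a) set" where
  "R_first D G0 G1 = {r. is_ranking D r \<and>
     (\<forall>d1\<in>G1 \<inter> D. \<forall>d0\<in>G0 \<inter> D. pos D r d1 < pos D r d0)}"

definition R_last :: "'a set \<Rightarrow> 'a set \<Rightarrow> 'a set \<Rightarrow> (nat \<Rightarrow> 'a) set" where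
  "R_last D G0 G1 = {r. is_ranking D r \<and>
     (\<forall>d1\<in>G1 \<inter> D. \<forall>d0\<in>G0 \<inter> D. pos D r d0 < pos D r d1)}"

text \<open>Exposure(G|r), Y(G), CTR(G|r); |G| is the size of the group in the population.\<close>
definition exposure :: "'a set \<Rightarrow> 'a set \<Rightarrow> (nat \<Rightarrow> 'a) \<Rightarrow> real" where
  "exposure D G r = (\<Sum>d\<in>G \<inter> D. bias (pos D r d)) / real (card G)"

definition Yavg :: "('a \<Rightarrow> real) \<Rightarrow> 'a set \<Rightarrow> real" where
  "Yavg y G = (\<Sum>d\<in>G. y d) / real (card G)"

definition ctr :: "'a set \<Rightarrow> ('a \<Rightarrow> real) \<Rightarrow> 'a set \<Rightarrow> (nat \<Rightarrow> 'a) \<Rightarrow> real" where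
  "ctr D y G r = (\<Sum>d\<in>G \<inter> D. bias (pos D r d) * y d) / real (card G)"

datatype metric = ED | ER | DTD | DTR | DID | DIR

text \<open>Value of metric m on ranking r of D, with groups G0 (non-protected), G1 (protected).\<close>
fun metric_val :: "metric \<Rightarrow> 'a set \<Rightarrow> 'a set \<Rightarrow> 'a set \<Rightarrow> ('a \<Rightarrow> real) \<Rightarrow> (nat \<Rightarrow> 'a) \<Rightarrow> real" where
  "metric_val ED D G0 G1 y r = exposure D G1 r - exposure D G0 r"
| "metric_val ER D G0 G1 y r = exposure D G1 r / exposure D G0 r"
| "metric_val DTD D G0 G1 y r = exposure D G1 r / Yavg y G1 - exposure D G0 r / Yavg y G0"
| "metric_val DTR D G0 G1 y r = (exposure D G1 r / exposure D G0 r) * (Yavg y G0 / Yavg y G1)"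
| "metric_val DID D G0 G1 y r = ctr D y G1 r / Yavg y G1 - ctr D y G0 r / Yavg y G0"
| "metric_val DIR D G0 G1 y r = (ctr D y G1 r / ctr D y G0 r) * (Yavg y G0 / Yavg y G1)"

fun v_opt :: "metric \<Rightarrow> real" where
  "v_opt ED = 0" | "v_opt ER = 1" | "v_opt DTD = 0"
| "v_opt DTR = 1" | "v_opt DID = 0" | "v_opt DIR = 1"

end

theory Submission
  imports Defs
begin

text \<open>Under uniform relevance every metric compares the exposures of the two groups, by a
  difference or by a ratio, so it lies below (above) its optimum exactly when the protected
  group receives less (more) exposure than the other one. Ranking one group entirely above the
  other gives each of its members a strictly larger position bias than each member of the other
  group, hence a strictly larger average.\<close>

lemma mean_less_mean:
  fixes f g :: "'b \<Rightarrow> real"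
  assumes "finite A" "A \<noteq> {}" "finite B" "B \<noteq> {}"
    and less: "\<And>a b. a \<in> A \<Longrightarrow> b \<in> B \<Longrightarrow> g b < f a"
  shows "sum g B / card B < sum f A / card A"
proof -
  obtain a0 where a0: "a0 \<in> A" "\<And>a. a \<in> A \<Longrightarrow> f a0 \<le> f a"
    using arg_min_if_finite[OF assms(1,2), of f] by (meson not_le)
  obtain b0 where b0: "b0 \<in> B" "\<And>b. b \<in> B \<Longrightarrow> g b \<le> g b0"
    using arg_min_if_finite[OF assms(3,4), of "\<lambda>b. - g b"] by (meson neg_less_iff_less not_le)
  have "sum g B / card B \<le> g b0"
    using sum_bounded_above[of B g "g b0"] b0 assms(3,4)
    by (simp add: divide_le_eq card_gt_0_iff mult.commute)
  also have "g b0 < f a0"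
    using less a0(1) b0(1) .
  also have "f a0 \<le> sum f A / card A"
    using sum_bounded_below[of A "f a0" f] a0 assms(1,2)
    by (simp add: le_divide_eq card_gt_0_iff mult.commute)
  finally show ?thesis .
qed

lemma bias_pos: "1 \<le> k \<Longrightarrow> 0 < bias k"
  unfolding bias_def by simp

lemma bias_strict_antimono:
  assumes "1 \<le> i" "i < j"
  shows "bias j < bias i"
proof -
  have "0 < log 2 (real i + 1)" "log 2 (real i + 1) < log 2 (real j + 1)"
    using assms by simp_all
  then show ?thesis
    unfolding bias_def by (simp add: frac_less2)
qed

lemma pos_ge_1:
  assumes "is_ranking D r" "d \<in> D"
  shows "1 \<le> pos D r d"
proof -
  have "the_inv_into {1..card D} r d \<in> {1..card D}"
    using assms by (intro the_inv_into_into) (auto simp: is_ranking_def bij_betw_def)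
  then show ?thesis
    by (simp add: pos_def)
qed

lemma exposure_pos:
  assumes "is_ranking D r" "G \<subseteq> D" "finite G" "G \<noteq> {}"
  shows "0 < exposure D G r"
proof -
  have "0 < (\<Sum>d\<in>G. bias (pos D r d))"
    using assms by (intro sum_pos) (auto intro: bias_pos pos_ge_1)
  then show ?thesis
    using assms(2-4) by (simp add: exposure_def Int_absorb2 card_gt_0_iff)
qed

lemma exposure_less_if_ranked_above:
  assumes "is_ranking D r" "finite D"
    and "G0 \<subseteq> D" "G0 \<noteq> {}" "G1 \<subseteq> D" "G1 \<noteq> {}"
    and above: "\<forall>d1\<in>G1 \<inter> D. \<forall>d0\<in>G0 \<inter> D. pos D r d1 < pos D r d0"
  shows "exposure D G0 r < exposure D G1 r"
proof -
  have "(\<Sum>d\<in>G0. bias (pos D r d)) / card G0 < (\<Sum>d\<in>G1. bias (pos D r d)) / card G1"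
  proof (rule mean_less_mean)
    fix d1 d0 assume "d1 \<in> G1" "d0 \<in> G0"
    then show "bias (pos D r d0) < bias (pos D r d1)"
      using above assms(3,5) pos_ge_1[OF assms(1)] by (intro bias_strict_antimono) auto
  qed (use assms(2-6) finite_subset in auto)
  then show ?thesis
    using assms(3,5) by (simp add: exposure_def Int_absorb2)
qed

lemma uniform_relevance_Yavg:
  assumes "finite G" "G \<noteq> {}" "\<forall>d\<in>G. y d = 1"
  shows "Yavg y G = 1"
  using assms by (simp add: Yavg_def card_gt_0_iff)

lemma uniform_relevance_ctr:
  assumes "\<forall>d\<in>G. y d = 1"
  shows "ctr D y G r = exposure D G r"
  using assms by (simp add: ctr_def exposure_def)

lemma uniform_relevance_metric_val_opt_iff:
  assumes "finite G0" "G0 \<noteq> {}" "finite G1" "G1 \<noteq> {}" "\<forall>d\<in>G0 \<union> G1. y d = 1"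
    and "0 < exposure D G0 r" "0 < exposure D G1 r"
  shows "metric_val m D G0 G1 y r < v_opt m \<longleftrightarrow> exposure D G1 r < exposure D G0 r"
    and "v_opt m < metric_val m D G0 G1 y r \<longleftrightarrow> exposure D G0 r < exposure D G1 r"
proof -
  have "Yavg y G0 = 1" "Yavg y G1 = 1"
    and "ctr D y G0 r = exposure D G0 r" "ctr D y G1 r = exposure D G1 r"
    using assms(1-5) by (simp_all add: uniform_relevance_Yavg uniform_relevance_ctr)
  then show "metric_val m D G0 G1 y r < v_opt m \<longleftrightarrow> exposure D G1 r < exposure D G0 r"
    and "v_opt m < metric_val m D G0 G1 y r \<longleftrightarrow> exposure D G0 r < exposure D G1 r"
    using assms(6,7) by (cases m; simp add: divide_less_eq less_divide_eq)+
qed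

theorem theorem2:
  fixes D G0 G1 :: "'a set" and y :: "'a \<Rightarrow> real" and m :: metric
    and r_last r_first :: "nat \<Rightarrow> 'a"
  assumes "finite D"
    and "G0 \<union> G1 = D" and "G0 \<inter> G1 = {}"
    and "G0 \<noteq> {}" and "G1 \<noteq> {}"
    and "\<forall>d\<in>D. y d = 1"
    and "r_last \<in> R_last D G0 G1"
    and "r_first \<in> R_first D G0 G1"
  shows "metric_val m D G0 G1 y r_last < v_opt m \<and> v_opt m < metric_val m D G0 G1 y r_first"
proof -
  have groups: "G0 \<subseteq> D" "G1 \<subseteq> D" "finite G0" "finite G1"
    using assms(1,2) finite_subset by auto
  have last: "is_ranking D r_last"
      "\<forall>d1\<in>G0 \<inter> D. \<forall>d0\<in>G1 \<inter> D. pos D r_last d1 < pos D r_last d0"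
    using assms(7) by (simp_all add: R_last_def)
  have first: "is_ranking D r_first"
      "\<forall>d1\<in>G1 \<inter> D. \<forall>d0\<in>G0 \<inter> D. pos D r_first d1 < pos D r_first d0"
    using assms(8) by (simp_all add: R_first_def)
  have relevance: "\<forall>d\<in>G0 \<union> G1. y d = 1"
    using assms(2,6) by simp
  have positive: "0 < exposure D G r" if "is_ranking D r" "G \<in> {G0, G1}" for G r
    using that assms(4,5) groups by (auto intro: exposure_pos)
  note compare =
    uniform_relevance_metric_val_opt_iff[OF groups(3) assms(4) groups(4) assms(5) relevance]
  have "exposure D G1 r_last < exposure D G0 r_last"
    using exposure_less_if_ranked_above[OF last(1) assms(1) groups(2) assms(5) groups(1) assms(4)
        last(2)] .
  then have "metric_val m D G0 G1 y r_last < v_opt m"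
    using compare(1) positive[OF last(1)] by blast
  moreover have "exposure D G0 r_first < exposure D G1 r_first"
    using exposure_less_if_ranked_above[OF first(1) assms(1) groups(1) assms(4) groups(2) assms(5)
        first(2)] .
  then have "v_opt m < metric_val m D G0 G1 y r_first"
    using compare(2) positive[OF first(1)] by blast
  ultimately show ?thesis ..
qed

end
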